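(* Let $\alpha_1,\dots,\alpha_4$ be constants, $H=H(t,t^-,q,q^-,p,p^-)$ smooth, and $X=\eta(t,q,p)\partial_q+\nu(t,q,p)\partial_p$ (i.e. $\xi\equiv0$) such that $$\Omega=\nu^{-}(\alpha_{1}\dot{q}+\alpha_{2}\dot{q}^{-})+p^{-}(\alpha_{1}D(\eta)+\alpha_{2}D(\eta^{-}))+\nu(\alpha_{3}\dot{q}+\alpha_{4}\dot{q}^{-})+p(\alpha_{3}D(\eta)+\alpha_{4}D(\eta^{-}))-\eta H_q-\nu H_p-\eta^{-}H_{q^-}-\nu^{-}H_{p^-}=0.$$ Then on the solutions of the delay canonical Hamiltonian equations $$\alpha_{1}\dot{q}^{+}+(\alpha_{2}+\alpha_{3})\dot{q}+\alpha_{4}\dot{q}^{-}=\frac{\partial}{\partial p}(H+H^{+}),\qquad \alpha_{4}\dot{p}^{+}+(\alpha_{2}+\alpha_{3})\dot{p}+\alpha_{1}\dot{p}^{-}=-\frac{\partial}{\partial q}(H+H^{+}),$$ considered with the constant delay $t^+-t=t-t^-=\tau$, the relation $D(C)=(S_+-1)P$ holds, where $C=\eta(\alpha_{4}p^{+}+(\alpha_{2}+\alpha_{3})p+\alpha_{1}p^{-})$ and $P=(\alpha_{2}p^{-}+\alpha_{4}p)D(\eta^{-})+\nu^{-}(\alpha_{1}\dot{q}+\alpha_{2}\dot{q}^{-})-\eta^{-}H_{q^-}-\nu^{-}H_{p^-}$.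
   Context: Constant delay $\tau>0$; $t^\pm=t\pm\tau$, $f^\pm=f(t\pm\tau)$; scalar $q,p$. $S_\pm$ are the forward/backward shift operators on expressions (shifting all arguments by one step); $\eta^\pm=S_\pm(\eta)$, $\nu^\pm=S_\pm(\nu)$; $H^+=S_+(H)=H(t^+,t,q^+,q,p^+,p)$. $D$ is the total derivative acting on variables at $t^-,t,t^+$. $\Omega$ is the invariance expression $X(\tilde H)+\tilde HD(\xi)$ with $\tilde H=p^{-}(\alpha_{1}\dot{q}+\alpha_{2}\dot{q}^{-})+p(\alpha_{3}\dot{q}+\alpha_{4}\dot{q}^{-})-H$, specialized to $\xi\equiv0$. *)

theory Defs
  imports "HOL-Analysis.Analysis"
begin

definition pd_t :: "(real \<Rightarrow> real \<Rightarrow> real \<Rightarrow> real) \<Rightarrow> real \<Rightarrow> real \<Rightarrow> real \<Rightarrow> real" where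
  "pd_t f t q p = deriv (\<lambda>s. f s q p) t"
definition pd_q :: "(real \<Rightarrow> real \<Rightarrow> real \<Rightarrow> real) \<Rightarrow> real \<Rightarrow> real \<Rightarrow> real \<Rightarrow> real" where
  "pd_q f t q p = deriv (\<lambda>s. f t s p) q"
definition pd_p :: "(real \<Rightarrow> real \<Rightarrow> real \<Rightarrow> real) \<Rightarrow> real \<Rightarrow> real \<Rightarrow> real \<Rightarrow> real" where
  "pd_p f t q p = deriv (\<lambda>s. f t q s) p"

text \<open>Total derivative D(f) of f(t,q,p) as an expression in the jet variables (t,q,p,qdot,pdot).\<close>
definition Dtot :: "(real \<Rightarrow> real \<Rightarrow> real \<Rightarrow> real) \<Rightarrow> real \<Rightarrow> real \<Rightarrow> real \<Rightarrow> real \<Rightarrow> real \<Rightarrow> real" where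
  "Dtot f t q p qd pd = pd_t f t q p + pd_q f t q p * qd + pd_p f t q p * pd"

type_synonym ham = "real \<Rightarrow> real \<Rightarrow> real \<Rightarrow> real \<Rightarrow> real \<Rightarrow> real \<Rightarrow> real"

definition H_q :: "ham \<Rightarrow> ham" where
  "H_q H t tm q qm p pm = deriv (\<lambda>s. H t tm s qm p pm) q"
definition H_qm :: "ham \<Rightarrow> ham" where
  "H_qm H t tm q qm p pm = deriv (\<lambda>s. H t tm q s p pm) qm"
definition H_p :: "ham \<Rightarrow> ham" where
  "H_p H t tm q qm p pm = deriv (\<lambda>s. H t tm q qm s pm) p"
definition H_pm :: "ham \<Rightarrow> ham" where
  "H_pm H t tm q qm p pm = deriv (\<lambda>s. H t tm q qm p s) pm"

end

theory Submission
  imports Defs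
begin

(*
  Differentiating C by the product rule gives D(eta) times the p-combination in C plus eta times
  the left-hand side of the p-equation, which the p-equation replaces by -eta (H_q + H^+_{q^-}).
  Comparing with S_+ P, after the q-equation has rewritten nu (alpha1 qdot^+ + alpha2 qdot - H^+_{p^-}),
  the difference D(C) - S_+ P is exactly Omega - P; hence D(C) = (S_+ - 1) P + Omega.
*)

lemma has_real_derivative_compose_directional:
  fixes F :: "'a::real_normed_vector \<Rightarrow> real"
  assumes "(F has_derivative D) (at (g s))"
    and "(g has_derivative (\<lambda>h. h *\<^sub>R v)) (at s)"
  shows "((\<lambda>r. F (g r)) has_real_derivative D v) (at s)"
proof -
  have "linear D"
    using assms(1) by (rule has_derivative_linear)
  then have "D (h *\<^sub>R v) = D v * h" for h
    by (simp add: linear_scale)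
  with has_derivative_compose[OF assms(2) assms(1)] show ?thesis
    unfolding has_field_derivative_def o_def by simp
qed

lemma has_derivative_coordinate_line:
  "((\<lambda>s. (s, q, p)) has_derivative (\<lambda>h. h *\<^sub>R (1, 0, 0))) (at t)"
  "((\<lambda>s. (t, s, p)) has_derivative (\<lambda>h. h *\<^sub>R (0, 1, 0))) (at q)"
  "((\<lambda>s. (t, q, s)) has_derivative (\<lambda>h. h *\<^sub>R (0, 0, 1))) (at p)"
  for t q p :: real
  by (auto intro!: derivative_eq_intros simp: zero_prod_def)

lemma
  fixes f :: "real \<Rightarrow> real \<Rightarrow> real \<Rightarrow> real"
  assumes "((\<lambda>(t, q, p). f t q p) has_derivative D) (at (t, q, p))"
  shows pd_t_eq_frechet: "pd_t f t q p = D (1, 0, 0)"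
    and pd_q_eq_frechet: "pd_q f t q p = D (0, 1, 0)"
    and pd_p_eq_frechet: "pd_p f t q p = D (0, 0, 1)"
proof -
  show "pd_t f t q p = D (1, 0, 0)"
    unfolding pd_t_def
    using has_real_derivative_compose_directional[where g="\<lambda>s. (s, q, p)" and s=t,
        OF assms has_derivative_coordinate_line(1)]
    by (auto intro!: DERIV_imp_deriv)
  show "pd_q f t q p = D (0, 1, 0)"
    unfolding pd_q_def
    using has_real_derivative_compose_directional[where g="\<lambda>s. (t, s, p)" and s=q,
        OF assms has_derivative_coordinate_line(2)]
    by (auto intro!: DERIV_imp_deriv)
  show "pd_p f t q p = D (0, 0, 1)"
    unfolding pd_p_def
    using has_real_derivative_compose_directional[where g="\<lambda>s. (t, q, s)" and s=p,
        OF assms has_derivative_coordinate_line(3)]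
    by (auto intro!: DERIV_imp_deriv)
qed

lemma Dtot_eq_frechet:
  fixes f :: "real \<Rightarrow> real \<Rightarrow> real \<Rightarrow> real"
  assumes D: "((\<lambda>(t, q, p). f t q p) has_derivative D) (at (t, q, p))"
  shows "Dtot f t q p qd pd = D (1, qd, pd)"
proof -
  have "linear D"
    using D by (rule has_derivative_linear)
  have "D (1, qd, pd) = D ((1, 0, 0) + qd *\<^sub>R (0, 1, 0) + pd *\<^sub>R (0, 0, 1))"
    by simp
  also have "\<dots> = D (1, 0, 0) + qd * D (0, 1, 0) + pd * D (0, 0, 1)"
    by (simp only: linear_add[OF \<open>linear D\<close>] linear_scale[OF \<open>linear D\<close>] real_scaleR_def)
  finally show ?thesis
    unfolding Dtot_def pd_t_eq_frechet[OF D] pd_q_eq_frechet[OF D] pd_p_eq_frechet[OF D]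
    by simp
qed

lemma has_real_derivative_Dtot:
  fixes f :: "real \<Rightarrow> real \<Rightarrow> real \<Rightarrow> real" and x y :: "real \<Rightarrow> real"
  assumes "(\<lambda>(t, q, p). f t q p) differentiable (at (t, x t, y t))"
    and "(x has_real_derivative x') (at t)"
    and "(y has_real_derivative y') (at t)"
  shows "((\<lambda>s. f s (x s) (y s)) has_real_derivative Dtot f t (x t) (y t) x' y') (at t)"
proof -
  obtain D where D: "((\<lambda>(t, q, p). f t q p) has_derivative D) (at (t, x t, y t))"
    using assms(1) unfolding differentiable_def by blast
  have "((\<lambda>s. (s, x s, y s)) has_derivative (\<lambda>h. h *\<^sub>R (1, x', y'))) (at t)"
    using assms(2,3) unfolding has_field_derivative_def by (auto intro!: derivative_eq_intros)
  from has_real_derivative_compose_directional[where g="\<lambda>s. (s, x s, y s)", OF D this]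
  show ?thesis
    unfolding Dtot_eq_frechet[OF D] by simp
qed

definition noether_charge ::
    "real \<Rightarrow> real \<Rightarrow> real \<Rightarrow> real \<Rightarrow> real \<Rightarrow> (real \<Rightarrow> real \<Rightarrow> real \<Rightarrow> real)
      \<Rightarrow> (real \<Rightarrow> real) \<Rightarrow> (real \<Rightarrow> real) \<Rightarrow> real \<Rightarrow> real" where
  "noether_charge \<alpha>1 \<alpha>2 \<alpha>3 \<alpha>4 \<tau> \<eta> q p s =
     \<eta> s (q s) (p s) * (\<alpha>4 * p (s + \<tau>) + (\<alpha>2 + \<alpha>3) * p s + \<alpha>1 * p (s - \<tau>))"

definition noether_flux ::
    "real \<Rightarrow> real \<Rightarrow> real \<Rightarrow> real \<Rightarrow> ham \<Rightarrow> (real \<Rightarrow> real \<Rightarrow> real \<Rightarrow> real)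
      \<Rightarrow> (real \<Rightarrow> real \<Rightarrow> real \<Rightarrow> real) \<Rightarrow> (real \<Rightarrow> real) \<Rightarrow> (real \<Rightarrow> real) \<Rightarrow> real \<Rightarrow> real" where
  "noether_flux \<alpha>1 \<alpha>2 \<alpha>4 \<tau> H \<eta> \<nu> q p s =
     (\<alpha>2 * p (s - \<tau>) + \<alpha>4 * p s)
       * Dtot \<eta> (s - \<tau>) (q (s - \<tau>)) (p (s - \<tau>)) (deriv q (s - \<tau>)) (deriv p (s - \<tau>))
     + \<nu> (s - \<tau>) (q (s - \<tau>)) (p (s - \<tau>)) * (\<alpha>1 * deriv q s + \<alpha>2 * deriv q (s - \<tau>))
     - \<eta> (s - \<tau>) (q (s - \<tau>)) (p (s - \<tau>)) * H_qm H s (s - \<tau>) (q s) (q (s - \<tau>)) (p s) (p (s - \<tau>))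
     - \<nu> (s - \<tau>) (q (s - \<tau>)) (p (s - \<tau>)) * H_pm H s (s - \<tau>) (q s) (q (s - \<tau>)) (p s) (p (s - \<tau>))"

definition invariance_expr ::
    "real \<Rightarrow> real \<Rightarrow> real \<Rightarrow> real \<Rightarrow> real \<Rightarrow> ham \<Rightarrow> (real \<Rightarrow> real \<Rightarrow> real \<Rightarrow> real)
      \<Rightarrow> (real \<Rightarrow> real \<Rightarrow> real \<Rightarrow> real)
      \<Rightarrow> real \<Rightarrow> real \<Rightarrow> real \<Rightarrow> real \<Rightarrow> real \<Rightarrow> real \<Rightarrow> real \<Rightarrow> real \<Rightarrow> real \<Rightarrow> real" where
  "invariance_expr \<alpha>1 \<alpha>2 \<alpha>3 \<alpha>4 \<tau> H \<eta> \<nu> t q qm p pm qd qdm pd pdm =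
     \<nu> (t - \<tau>) qm pm * (\<alpha>1 * qd + \<alpha>2 * qdm)
     + pm * (\<alpha>1 * Dtot \<eta> t q p qd pd + \<alpha>2 * Dtot \<eta> (t - \<tau>) qm pm qdm pdm)
     + \<nu> t q p * (\<alpha>3 * qd + \<alpha>4 * qdm)
     + p * (\<alpha>3 * Dtot \<eta> t q p qd pd + \<alpha>4 * Dtot \<eta> (t - \<tau>) qm pm qdm pdm)
     - \<eta> t q p * H_q H t (t - \<tau>) q qm p pm
     - \<nu> t q p * H_p H t (t - \<tau>) q qm p pm
     - \<eta> (t - \<tau>) qm pm * H_qm H t (t - \<tau>) q qm p pm
     - \<nu> (t - \<tau>) qm pm * H_pm H t (t - \<tau>) q qm p pm"

lemma has_real_derivative_noether_charge:
  fixes \<eta> :: "real \<Rightarrow> real \<Rightarrow> real \<Rightarrow> real" and q p :: "real \<Rightarrow> real"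
  assumes \<eta>: "(\<lambda>(t, q, p). \<eta> t q p) differentiable (at (t, q t, p t))"
    and q: "q differentiable (at t)"
    and p: "p differentiable (at (t - \<tau>))" "p differentiable (at t)" "p differentiable (at (t + \<tau>))"
  shows "(noether_charge \<alpha>1 \<alpha>2 \<alpha>3 \<alpha>4 \<tau> \<eta> q p has_real_derivative
           Dtot \<eta> t (q t) (p t) (deriv q t) (deriv p t)
             * (\<alpha>4 * p (t + \<tau>) + (\<alpha>2 + \<alpha>3) * p t + \<alpha>1 * p (t - \<tau>))
           + \<eta> t (q t) (p t)
             * (\<alpha>4 * deriv p (t + \<tau>) + (\<alpha>2 + \<alpha>3) * deriv p t + \<alpha>1 * deriv p (t - \<tau>))) (at t)"
proof -
  have deriv: "(f has_real_derivative deriv f s) (at s)" if "f differentiable (at s)" for f s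
    using that DERIV_deriv_iff_real_differentiable by blast
  have p_shift: "((\<lambda>s. p (s + c)) has_real_derivative deriv p (t + c)) (at t)"
    if "p differentiable (at (t + c))" for c
    using deriv[OF that] DERIV_shift by blast
  have "((\<lambda>s. p (s - \<tau>)) has_real_derivative deriv p (t - \<tau>)) (at t)"
    using p_shift[of "- \<tau>"] p(1) by simp
  moreover note p_shift[OF p(3)] deriv[OF p(2)]
  moreover note has_real_derivative_Dtot[OF \<eta> deriv[OF q] deriv[OF p(2)]]
  ultimately show ?thesis
    unfolding noether_charge_def[abs_def]
    by (auto intro!: derivative_eq_intros simp: algebra_simps)
qed

lemma noether_charge_derivative_eq_flux_difference:
  assumes Omega: "invariance_expr \<alpha>1 \<alpha>2 \<alpha>3 \<alpha>4 \<tau> H \<eta> \<nu> t (q t) (q (t - \<tau>)) (p t) (p (t - \<tau>))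
                    (deriv q t) (deriv q (t - \<tau>)) (deriv p t) (deriv p (t - \<tau>)) = 0"
    and eq_q: "\<alpha>1 * deriv q (t + \<tau>) + (\<alpha>2 + \<alpha>3) * deriv q t + \<alpha>4 * deriv q (t - \<tau>)
                = H_p H t (t - \<tau>) (q t) (q (t - \<tau>)) (p t) (p (t - \<tau>))
                  + H_pm H (t + \<tau>) t (q (t + \<tau>)) (q t) (p (t + \<tau>)) (p t)"
    and eq_p: "\<alpha>4 * deriv p (t + \<tau>) + (\<alpha>2 + \<alpha>3) * deriv p t + \<alpha>1 * deriv p (t - \<tau>)
                = - (H_q H t (t - \<tau>) (q t) (q (t - \<tau>)) (p t) (p (t - \<tau>))
                     + H_qm H (t + \<tau>) t (q (t + \<tau>)) (q t) (p (t + \<tau>)) (p t))"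
  shows "Dtot \<eta> t (q t) (p t) (deriv q t) (deriv p t)
           * (\<alpha>4 * p (t + \<tau>) + (\<alpha>2 + \<alpha>3) * p t + \<alpha>1 * p (t - \<tau>))
         + \<eta> t (q t) (p t)
           * (\<alpha>4 * deriv p (t + \<tau>) + (\<alpha>2 + \<alpha>3) * deriv p t + \<alpha>1 * deriv p (t - \<tau>))
         = noether_flux \<alpha>1 \<alpha>2 \<alpha>4 \<tau> H \<eta> \<nu> q p (t + \<tau>) - noether_flux \<alpha>1 \<alpha>2 \<alpha>4 \<tau> H \<eta> \<nu> q p t"
  using Omega arg_cong[OF eq_q, of "\<lambda>x. \<nu> t (q t) (p t) * x"]
  unfolding eq_p noether_flux_def invariance_expr_def
  by (simp add: algebra_simps)

theorem proposition4:
  fixes \<tau> \<alpha>1 \<alpha>2 \<alpha>3 \<alpha>4 :: real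
    and H :: ham
    and \<eta> \<nu> :: "real \<Rightarrow> real \<Rightarrow> real \<Rightarrow> real"
    and q p :: "real \<Rightarrow> real"
  assumes tau_pos: "\<tau> > 0"
    and H_diff: "\<forall>x. (\<lambda>(t, tm, q, qm, p, pm). H t tm q qm p pm) differentiable (at x)"
    and eta_diff: "\<forall>x. (\<lambda>(t, q, p). \<eta> t q p) differentiable (at x)"
    and nu_diff: "\<forall>x. (\<lambda>(t, q, p). \<nu> t q p) differentiable (at x)"
    and Omega_zero:
      "\<forall>t q qm p pm qd qdm pd pdm.
         \<nu> (t - \<tau>) qm pm * (\<alpha>1 * qd + \<alpha>2 * qdm)
         + pm * (\<alpha>1 * Dtot \<eta> t q p qd pd + \<alpha>2 * Dtot \<eta> (t - \<tau>) qm pm qdm pdm)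
         + \<nu> t q p * (\<alpha>3 * qd + \<alpha>4 * qdm)
         + p * (\<alpha>3 * Dtot \<eta> t q p qd pd + \<alpha>4 * Dtot \<eta> (t - \<tau>) qm pm qdm pdm)
         - \<eta> t q p * H_q H t (t - \<tau>) q qm p pm
         - \<nu> t q p * H_p H t (t - \<tau>) q qm p pm
         - \<eta> (t - \<tau>) qm pm * H_qm H t (t - \<tau>) q qm p pm
         - \<nu> (t - \<tau>) qm pm * H_pm H t (t - \<tau>) q qm p pm = 0"
    and q_diff: "\<forall>t. q differentiable (at t)"
    and p_diff: "\<forall>t. p differentiable (at t)"
    and eq_q: "\<forall>t. \<alpha>1 * deriv q (t + \<tau>) + (\<alpha>2 + \<alpha>3) * deriv q t + \<alpha>4 * deriv q (t - \<tau>)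
                  = H_p H t (t - \<tau>) (q t) (q (t - \<tau>)) (p t) (p (t - \<tau>))
                    + H_pm H (t + \<tau>) t (q (t + \<tau>)) (q t) (p (t + \<tau>)) (p t)"
    and eq_p: "\<forall>t. \<alpha>4 * deriv p (t + \<tau>) + (\<alpha>2 + \<alpha>3) * deriv p t + \<alpha>1 * deriv p (t - \<tau>)
                  = - (H_q H t (t - \<tau>) (q t) (q (t - \<tau>)) (p t) (p (t - \<tau>))
                       + H_qm H (t + \<tau>) t (q (t + \<tau>)) (q t) (p (t + \<tau>)) (p t))"
  shows "\<forall>t. ((\<lambda>s. \<eta> s (q s) (p s) * (\<alpha>4 * p (s + \<tau>) + (\<alpha>2 + \<alpha>3) * p s + \<alpha>1 * p (s - \<tau>)))
              has_real_derivative
              ((\<lambda>s. (\<alpha>2 * p (s - \<tau>) + \<alpha>4 * p s)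
                       * Dtot \<eta> (s - \<tau>) (q (s - \<tau>)) (p (s - \<tau>)) (deriv q (s - \<tau>)) (deriv p (s - \<tau>))
                     + \<nu> (s - \<tau>) (q (s - \<tau>)) (p (s - \<tau>)) * (\<alpha>1 * deriv q s + \<alpha>2 * deriv q (s - \<tau>))
                     - \<eta> (s - \<tau>) (q (s - \<tau>)) (p (s - \<tau>)) * H_qm H s (s - \<tau>) (q s) (q (s - \<tau>)) (p s) (p (s - \<tau>))
                     - \<nu> (s - \<tau>) (q (s - \<tau>)) (p (s - \<tau>)) * H_pm H s (s - \<tau>) (q s) (q (s - \<tau>)) (p s) (p (s - \<tau>)))
                 (t + \<tau>)
               - (\<lambda>s. (\<alpha>2 * p (s - \<tau>) + \<alpha>4 * p s)
                       * Dtot \<eta> (s - \<tau>) (q (s - \<tau>)) (p (s - \<tau>)) (deriv q (s - \<tau>)) (deriv p (s - \<tau>))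
                     + \<nu> (s - \<tau>) (q (s - \<tau>)) (p (s - \<tau>)) * (\<alpha>1 * deriv q s + \<alpha>2 * deriv q (s - \<tau>))
                     - \<eta> (s - \<tau>) (q (s - \<tau>)) (p (s - \<tau>)) * H_qm H s (s - \<tau>) (q s) (q (s - \<tau>)) (p s) (p (s - \<tau>))
                     - \<nu> (s - \<tau>) (q (s - \<tau>)) (p (s - \<tau>)) * H_pm H s (s - \<tau>) (q s) (q (s - \<tau>)) (p s) (p (s - \<tau>)))
                 t)) (at t)"
proof -
  have "(noether_charge \<alpha>1 \<alpha>2 \<alpha>3 \<alpha>4 \<tau> \<eta> q p has_real_derivative
          noether_flux \<alpha>1 \<alpha>2 \<alpha>4 \<tau> H \<eta> \<nu> q p (t + \<tau>)
          - noether_flux \<alpha>1 \<alpha>2 \<alpha>4 \<tau> H \<eta> \<nu> q p t) (at t)" for t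
  proof -
    have "invariance_expr \<alpha>1 \<alpha>2 \<alpha>3 \<alpha>4 \<tau> H \<eta> \<nu> t (q t) (q (t - \<tau>)) (p t) (p (t - \<tau>))
            (deriv q t) (deriv q (t - \<tau>)) (deriv p t) (deriv p (t - \<tau>)) = 0"
      using Omega_zero unfolding invariance_expr_def by blast
    from noether_charge_derivative_eq_flux_difference[OF this eq_q[rule_format] eq_p[rule_format]]
    show ?thesis
      by (rule DERIV_cong[OF has_real_derivative_noether_charge[OF eta_diff[rule_format]
            q_diff[rule_format] p_diff[rule_format] p_diff[rule_format] p_diff[rule_format]]])
  qed
  then show ?thesis
    unfolding noether_charge_def[abs_def] noether_flux_def[abs_def] by simp
qed

end
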